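(* Let $k\ge 3$, $n_1=\cdots=n_k\ge 2$, $r\in[k]$, and let $G,G'\in\mathcal{O}(CS^r_{n_1,\dots,n_k})$. Suppose that $G$ and $G'$ belong to the same one of the following three classes: (Case 1) $G=\Gamma(\text{complete};\ t_i=\mathrm{ss}\text{ for }i\in I,\ t_i=\mathrm{sc}\text{ for }i\notin I)$ for some $I\subseteq[k]$; (Case 2) $G=\Gamma(\text{star toward }j;\ t_j=\mathrm{sc},\ t_i=\mathrm{ss}\text{ for }i\in I,\ t_i=\mathrm{c}\text{ for }i\notin I\cup\{j\})$ for some $j\in[k]$ and $I\subseteq[k]\setminus\{j\}$; (Case 3) the same as Case 2 but with $t_j=\mathrm{c}$; and similarly $G'$ with index set $I'$ (and possibly a different index $j'$). If $|I|=|I'|$, then $G$ and $G'$ are isomorphic.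
   Context: $V=U_1\sqcup\cdots\sqcup U_k$, $|U_i|=n_i$. The clique-star $CS^r_{n_1,\dots,n_k}$: each $U_i$ is a clique, every vertex of $U_r$ is adjacent to every vertex of each $U_i$, $i\ne r$, no edges between $U_i,U_l$ for distinct $i,l\ne r$. The local complement $c_v(G)$ complements the edges among the neighbours of $v$; $\mathcal{O}(G)$ is the set of graphs on $V$ obtainable from $G$ by finite sequences of local complements. Graph family $\Gamma$: each $i$ gets a type $t_i\in\{\mathrm{c},\mathrm{sc},\mathrm{ss}\}$: $\mathrm{c}$: $U_i$ a clique, $R_i=U_i$; $\mathrm{sc}$: $U_i$ independent, $R_i=U_i$; $\mathrm{ss}$: a center $c_i\in U_i$ adjacent to all other vertices of $U_i$, no other internal edges, $R_i=\{c_i\}$. Central type "complete": for all $i\ne l$, all edges between $R_i$ and $R_l$; "star toward $j$": for each $i\ne j$ all edges between $R_i$ and $R_j$, and no other edges between different parts. (Every graph in $\mathcal{O}(CS^r_{n_1,\dots,n_k})$ is of one of the three case forms.) *)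

theory Defs
  imports Main
begin

text \<open>Parts are indexed by 0..<k (instead of 1..k). A simple graph on V is
  represented by its edge set, a set of 2-element subsets of V.\<close>

definition verts :: "nat \<Rightarrow> nat \<Rightarrow> (nat \<times> nat) set" where
  "verts k n = {0..<k} \<times> {0..<n}"

definition part :: "nat \<Rightarrow> nat \<Rightarrow> (nat \<times> nat) set" where
  "part n i = {i} \<times> {0..<n}"

definition clique_star :: "nat \<Rightarrow> nat \<Rightarrow> nat \<Rightarrow> (nat \<times> nat) set set" where
  "clique_star k n r = {{x, y} | x y. x \<in> verts k n \<and> y \<in> verts k n \<and> x \<noteq> y \<and>
      (fst x = fst y \<or> fst x = r \<or> fst y = r)}"

definition nbhd :: "(nat \<times> nat) set set \<Rightarrow> nat \<times> nat \<Rightarrow> (nat \<times> nat) set" where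
  "nbhd E v = {u. {v, u} \<in> E \<and> u \<noteq> v}"

definition local_compl :: "(nat \<times> nat) set set \<Rightarrow> nat \<times> nat \<Rightarrow> (nat \<times> nat) set set" where
  "local_compl E v =
     (let P = {{x, y} | x y. x \<in> nbhd E v \<and> y \<in> nbhd E v \<and> x \<noteq> y}
      in (E - P) \<union> (P - E))"

inductive_set lc_orbit :: "(nat \<times> nat) set \<Rightarrow> (nat \<times> nat) set set \<Rightarrow> (nat \<times> nat) set set set"
  for V E0 where
  base: "E0 \<in> lc_orbit V E0"
| step: "E \<in> lc_orbit V E0 \<Longrightarrow> v \<in> V \<Longrightarrow> local_compl E v \<in> lc_orbit V E0"

datatype ptype = C | SC | SS

datatype ctype = Complete | StarToward nat

definition Rset :: "nat \<Rightarrow> (nat \<Rightarrow> ptype) \<Rightarrow> (nat \<Rightarrow> nat) \<Rightarrow> nat \<Rightarrow> (nat \<times> nat) set" where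
  "Rset n t cen i = (if t i = SS then {(i, cen i)} else part n i)"

definition internal_edges :: "nat \<Rightarrow> (nat \<Rightarrow> ptype) \<Rightarrow> (nat \<Rightarrow> nat) \<Rightarrow> nat \<Rightarrow> (nat \<times> nat) set set" where
  "internal_edges n t cen i =
     (case t i of
        C \<Rightarrow> {{x, y} | x y. x \<in> part n i \<and> y \<in> part n i \<and> x \<noteq> y}
      | SC \<Rightarrow> {}
      | SS \<Rightarrow> {{(i, cen i), y} | y. y \<in> part n i \<and> y \<noteq> (i, cen i)})"

definition Gamma :: "nat \<Rightarrow> nat \<Rightarrow> ctype \<Rightarrow> (nat \<Rightarrow> ptype) \<Rightarrow> (nat \<Rightarrow> nat) \<Rightarrow> (nat \<times> nat) set set" where
  "Gamma k n ct t cen =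
     (\<Union>i\<in>{0..<k}. internal_edges n t cen i) \<union>
     (case ct of
        Complete \<Rightarrow> {{x, y} | x y i l. i < k \<and> l < k \<and> i \<noteq> l \<and> x \<in> Rset n t cen i \<and> y \<in> Rset n t cen l}
      | StarToward j \<Rightarrow> {{x, y} | x y i. i < k \<and> i \<noteq> j \<and> x \<in> Rset n t cen i \<and> y \<in> Rset n t cen j})"

definition valid_centres :: "nat \<Rightarrow> nat \<Rightarrow> (nat \<Rightarrow> nat) \<Rightarrow> bool" where
  "valid_centres k n cen \<longleftrightarrow> (\<forall>i<k. cen i < n)"

definition case1 :: "nat \<Rightarrow> nat \<Rightarrow> (nat \<times> nat) set set \<Rightarrow> nat set \<Rightarrow> bool" where
  "case1 k n G I \<longleftrightarrow> I \<subseteq> {0..<k} \<and>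
     (\<exists>cen. valid_centres k n cen \<and>
        G = Gamma k n Complete (\<lambda>i. if i \<in> I then SS else SC) cen)"

definition case2 :: "nat \<Rightarrow> nat \<Rightarrow> (nat \<times> nat) set set \<Rightarrow> nat set \<Rightarrow> bool" where
  "case2 k n G I \<longleftrightarrow> (\<exists>j<k. I \<subseteq> {0..<k} - {j} \<and>
     (\<exists>cen. valid_centres k n cen \<and>
        G = Gamma k n (StarToward j) (\<lambda>i. if i = j then SC else if i \<in> I then SS else C) cen))"

definition case3 :: "nat \<Rightarrow> nat \<Rightarrow> (nat \<times> nat) set set \<Rightarrow> nat set \<Rightarrow> bool" where
  "case3 k n G I \<longleftrightarrow> (\<exists>j<k. I \<subseteq> {0..<k} - {j} \<and>
     (\<exists>cen. valid_centres k n cen \<and>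
        G = Gamma k n (StarToward j) (\<lambda>i. if i = j then C else if i \<in> I then SS else C) cen))"

definition graph_iso :: "(nat \<times> nat) set \<Rightarrow> (nat \<times> nat) set set \<Rightarrow> (nat \<times> nat) set set \<Rightarrow> bool" where
  "graph_iso V E E' \<longleftrightarrow> (\<exists>f. bij_betw f V V \<and>
     (\<forall>x\<in>V. \<forall>y\<in>V. {x, y} \<in> E \<longleftrightarrow> {f x, f y} \<in> E'))"

end

theory Submission
  imports Defs "HOL-Combinatorics.Transposition"
begin

text \<open>Two graphs of the same case with \<open>|I| = |I'|\<close> differ only by a renaming of the parts
  and by the choice of the centres. A permutation \<open>\<sigma>\<close> of the parts carrying \<open>I\<close> onto \<open>I'\<close>
  (and \<open>j\<close> to \<open>j'\<close> in cases 2 and 3), combined inside each part with the transposition of the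
  two centres, is an isomorphism.\<close>

definition in_Rset :: "(nat \<Rightarrow> ptype) \<Rightarrow> (nat \<Rightarrow> nat) \<Rightarrow> nat \<times> nat \<Rightarrow> bool" where
  "in_Rset t cen x \<longleftrightarrow> (t (fst x) = SS \<longrightarrow> snd x = cen (fst x))"

definition part_adj :: "ptype \<Rightarrow> nat \<Rightarrow> nat \<Rightarrow> nat \<Rightarrow> bool" where
  "part_adj p c b d = (case p of C \<Rightarrow> True | SC \<Rightarrow> False | SS \<Rightarrow> b = c \<or> d = c)"

definition gamma_adj :: "ctype \<Rightarrow> (nat \<Rightarrow> ptype) \<Rightarrow> (nat \<Rightarrow> nat) \<Rightarrow> nat \<times> nat \<Rightarrow> nat \<times> nat \<Rightarrow> bool" where
  "gamma_adj ct t cen x y \<longleftrightarrow>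
     (fst x = fst y \<and> part_adj (t (fst x)) (cen (fst x)) (snd x) (snd y)) \<or>
     (fst x \<noteq> fst y \<and> in_Rset t cen x \<and> in_Rset t cen y \<and>
      (case ct of Complete \<Rightarrow> True | StarToward j \<Rightarrow> fst x = j \<or> fst y = j))"

lemma Rset_iff:
  assumes "cen i < n"
  shows "x \<in> Rset n t cen i \<longleftrightarrow> fst x = i \<and> snd x < n \<and> in_Rset t cen x"
  using assms by (cases x) (auto simp: Rset_def part_def in_Rset_def)

lemma doubleton_in_internal_edges_iff:
  assumes "cen i < n"
  shows "{(a, b), (c, d)} \<in> internal_edges n t cen i \<longleftrightarrow>
    (a, b) \<noteq> (c, d) \<and> a = i \<and> c = i \<and> b < n \<and> d < n \<and> part_adj (t i) (cen i) b d"
  using assms by (cases "t i") (auto simp: part_adj_def internal_edges_def part_def doubleton_eq_iff)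

lemma doubleton_in_UN_internal_edges_iff:
  assumes "x \<in> verts k n" "y \<in> verts k n" "valid_centres k n cen"
  shows "{x, y} \<in> (\<Union>i\<in>{0..<k}. internal_edges n t cen i) \<longleftrightarrow>
    x \<noteq> y \<and> fst x = fst y \<and> part_adj (t (fst x)) (cen (fst x)) (snd x) (snd y)"
  using assms by (cases x; cases y) (auto simp: doubleton_in_internal_edges_iff verts_def valid_centres_def)

lemma doubleton_in_complete_cross_edges_iff:
  assumes "x \<in> verts k n" "y \<in> verts k n" "valid_centres k n cen"
  shows "{x, y} \<in> {{x, y} | x y i l. i < k \<and> l < k \<and> i \<noteq> l \<and> x \<in> Rset n t cen i \<and> y \<in> Rset n t cen l}
    \<longleftrightarrow> fst x \<noteq> fst y \<and> in_Rset t cen x \<and> in_Rset t cen y" (is "?L \<longleftrightarrow> ?R")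
proof
  assume ?L
  then obtain x' y' i l where "{x, y} = {x', y'}" "i < k" "l < k" "i \<noteq> l"
      "x' \<in> Rset n t cen i" "y' \<in> Rset n t cen l"
    by blast
  with assms(3) show ?R by (auto simp: Rset_iff valid_centres_def doubleton_eq_iff)
next
  assume ?R
  moreover have "x \<in> Rset n t cen (fst x)" "y \<in> Rset n t cen (fst y)" "fst x < k" "fst y < k"
    using assms \<open>?R\<close> by (auto simp: Rset_iff verts_def valid_centres_def)
  ultimately show ?L by blast
qed

lemma doubleton_in_star_cross_edges_iff:
  assumes "x \<in> verts k n" "y \<in> verts k n" "valid_centres k n cen" "j < k"
  shows "{x, y} \<in> {{x, y} | x y i. i < k \<and> i \<noteq> j \<and> x \<in> Rset n t cen i \<and> y \<in> Rset n t cen j}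
    \<longleftrightarrow> fst x \<noteq> fst y \<and> in_Rset t cen x \<and> in_Rset t cen y \<and> (fst x = j \<or> fst y = j)"
    (is "?L \<longleftrightarrow> ?R")
proof
  assume ?L
  then obtain x' y' i where "{x, y} = {x', y'}" "i < k" "i \<noteq> j"
      "x' \<in> Rset n t cen i" "y' \<in> Rset n t cen j"
    by blast
  with assms(3,4) show ?R by (auto simp: Rset_iff valid_centres_def doubleton_eq_iff)
next
  assume R: ?R
  show ?L
  proof (cases "fst y = j")
    case True
    moreover have "x \<in> Rset n t cen (fst x)" "y \<in> Rset n t cen j" "fst x < k"
      using assms R True by (auto simp: Rset_iff verts_def valid_centres_def)
    ultimately show ?thesis using R by blast
  next
    case False
    with R have "fst x = j" by simp
    moreover have "y \<in> Rset n t cen (fst y)" "x \<in> Rset n t cen j" "fst y < k" "{x, y} = {y, x}"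
      using assms R \<open>fst x = j\<close> by (auto simp: Rset_iff verts_def valid_centres_def)
    ultimately show ?thesis using R False by blast
  qed
qed

lemma doubleton_in_Gamma_iff:
  assumes "x \<in> verts k n" "y \<in> verts k n" "valid_centres k n cen"
    and "\<And>j. ct = StarToward j \<Longrightarrow> j < k"
  shows "{x, y} \<in> Gamma k n ct t cen \<longleftrightarrow> x \<noteq> y \<and> gamma_adj ct t cen x y"
proof (cases ct)
  case Complete
  then show ?thesis
    unfolding Gamma_def Complete ctype.case Un_iff doubleton_in_UN_internal_edges_iff[OF assms(1-3)]
      doubleton_in_complete_cross_edges_iff[OF assms(1-3)]
    by (auto simp: gamma_adj_def)
next
  case (StarToward j)
  with assms(4) have "j < k" by simp
  then show ?thesis
    unfolding Gamma_def StarToward ctype.case Un_iff doubleton_in_UN_internal_edges_iff[OF assms(1-3)]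
      doubleton_in_star_cross_edges_iff[OF assms(1-3) \<open>j < k\<close>]
    by (auto simp: gamma_adj_def)
qed

definition relabel :: "(nat \<Rightarrow> nat) \<Rightarrow> (nat \<Rightarrow> nat) \<Rightarrow> (nat \<Rightarrow> nat) \<Rightarrow> nat \<times> nat \<Rightarrow> nat \<times> nat" where
  "relabel \<sigma> cen cen' x = (\<sigma> (fst x), transpose (cen (fst x)) (cen' (\<sigma> (fst x))) (snd x))"

lemma bij_betw_relabel:
  assumes "bij_betw \<sigma> {0..<k} {0..<k}" "valid_centres k n cen" "valid_centres k n cen'"
  shows "bij_betw (relabel \<sigma> cen cen') (verts k n) (verts k n)"
proof -
  have "\<sigma> i < k" if "i < k" for i
    using assms(1) that by (auto simp: bij_betw_def)
  with assms(2,3) have "relabel \<sigma> cen cen' ` verts k n \<subseteq> verts k n"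
    by (auto simp: relabel_def verts_def valid_centres_def transpose_def)
  moreover have "inj_on (relabel \<sigma> cen cen') (verts k n)"
    using assms(1) by (auto simp: inj_on_def relabel_def verts_def bij_betw_def transpose_eq_iff)
  ultimately show ?thesis
    by (simp add: bij_betw_def endo_inj_surj verts_def)
qed

lemma gamma_adj_relabel:
  assumes "inj_on \<sigma> {0..<k}" "fst x < k" "fst y < k"
    and "\<And>i. i < k \<Longrightarrow> t' (\<sigma> i) = t i"
    and "ct = Complete \<and> ct' = Complete \<or> (\<exists>j<k. ct = StarToward j \<and> ct' = StarToward (\<sigma> j))"
  shows "gamma_adj ct' t' cen' (relabel \<sigma> cen cen' x) (relabel \<sigma> cen cen' y) = gamma_adj ct t cen x y"
proof -
  have \<sigma>_eq: "\<sigma> i = \<sigma> l \<longleftrightarrow> i = l" if "i < k" "l < k" for i l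
    using assms(1) that by (auto simp: inj_on_def)
  have centre: "transpose c c' b = c' \<longleftrightarrow> b = c" for c c' b :: nat
    by (auto simp: transpose_eq_iff)
  show ?thesis
    using assms(2-5) \<sigma>_eq
    by (auto simp: gamma_adj_def relabel_def in_Rset_def part_adj_def centre split: ptype.splits)
qed

lemma Gamma_iso:
  assumes \<sigma>: "bij_betw \<sigma> {0..<k} {0..<k}"
    and types: "\<And>i. i < k \<Longrightarrow> t' (\<sigma> i) = t i"
    and cen: "valid_centres k n cen" "valid_centres k n cen'"
    and ct: "ct = Complete \<and> ct' = Complete \<or> (\<exists>j<k. ct = StarToward j \<and> ct' = StarToward (\<sigma> j))"
  shows "graph_iso (verts k n) (Gamma k n ct t cen) (Gamma k n ct' t' cen')"
  unfolding graph_iso_def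
proof (intro exI conjI ballI)
  let ?f = "relabel \<sigma> cen cen'"
  show bij: "bij_betw ?f (verts k n) (verts k n)"
    using \<sigma> cen by (rule bij_betw_relabel)
  fix x y assume xy: "x \<in> verts k n" "y \<in> verts k n"
  have "?f x \<in> verts k n" "?f y \<in> verts k n" "?f x = ?f y \<longleftrightarrow> x = y"
    using bij xy by (auto simp: bij_betw_def inj_on_eq_iff)
  moreover have "ct = StarToward j \<Longrightarrow> j < k" "ct' = StarToward j \<Longrightarrow> j < k" for j
    using ct \<sigma> by (auto simp: bij_betw_def)
  moreover have "gamma_adj ct' t' cen' (?f x) (?f y) = gamma_adj ct t cen x y"
    using \<sigma> xy types ct by (intro gamma_adj_relabel) (auto simp: bij_betw_def verts_def)
  ultimately show "{x, y} \<in> Gamma k n ct t cen \<longleftrightarrow> {?f x, ?f y} \<in> Gamma k n ct' t' cen'"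
    using xy cen by (simp add: doubleton_in_Gamma_iff)
qed

lemma ex_bij_betw_preserving_subset:
  assumes "finite S" "finite S'" "card S = card S'"
    and "A \<subseteq> S" "A' \<subseteq> S'" "card A = card A'"
  shows "\<exists>\<sigma>. bij_betw \<sigma> S S' \<and> (\<forall>i\<in>S. \<sigma> i \<in> A' \<longleftrightarrow> i \<in> A)"
proof -
  have fin: "finite A" "finite A'"
    using assms finite_subset by auto
  obtain g where g: "bij_betw g A A'"
    using finite_same_card_bij[OF fin] assms(6) by blast
  have "card (S - A) = card (S' - A')"
    using assms fin by (simp add: card_Diff_subset)
  then obtain h where h: "bij_betw h (S - A) (S' - A')"
    using finite_same_card_bij assms(1,2) by blast
  let ?\<sigma> = "\<lambda>i. if i \<in> A then g i else h i"
  have "bij_betw ?\<sigma> (A \<union> (S - A)) (A' \<union> (S' - A'))"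
    using g h by (rule bij_betw_disjoint_Un) auto
  moreover have "A \<union> (S - A) = S" "A' \<union> (S' - A') = S'"
    using assms(4,5) by auto
  ultimately have "bij_betw ?\<sigma> S S'" by simp
  moreover have "\<forall>i\<in>S. ?\<sigma> i \<in> A' \<longleftrightarrow> i \<in> A"
    using g h by (auto simp: bij_betw_def)
  ultimately show ?thesis by blast
qed

lemma case1_iso:
  assumes "case1 k n G I" "case1 k n G' I'" "card I = card I'"
  shows "graph_iso (verts k n) G G'"
proof -
  obtain cen where I: "I \<subseteq> {0..<k}" "valid_centres k n cen"
      "G = Gamma k n Complete (\<lambda>i. if i \<in> I then SS else SC) cen"
    using assms(1) by (auto simp: case1_def)
  obtain cen' where I': "I' \<subseteq> {0..<k}" "valid_centres k n cen'"
      "G' = Gamma k n Complete (\<lambda>i. if i \<in> I' then SS else SC) cen'"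
    using assms(2) by (auto simp: case1_def)
  obtain \<sigma> where \<sigma>: "bij_betw \<sigma> {0..<k} {0..<k}" "\<forall>i\<in>{0..<k}. \<sigma> i \<in> I' \<longleftrightarrow> i \<in> I"
    using ex_bij_betw_preserving_subset[of "{0..<k}" "{0..<k}" I I'] I(1) I'(1) assms(3) by auto
  show ?thesis
    unfolding I(3) I'(3) using \<sigma> by (intro Gamma_iso[OF \<sigma>(1) _ I(2) I'(2)]) auto
qed

lemma ex_permutation_mapping_point_and_subset:
  fixes j j' k :: nat
  assumes "j < k" "I \<subseteq> {0..<k} - {j}" "j' < k" "I' \<subseteq> {0..<k} - {j'}" "card I = card I'"
  shows "\<exists>\<sigma>. bij_betw \<sigma> {0..<k} {0..<k} \<and> \<sigma> j = j' \<and>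
    (\<forall>i<k. i \<noteq> j \<longrightarrow> \<sigma> i \<noteq> j' \<and> (\<sigma> i \<in> I' \<longleftrightarrow> i \<in> I))"
proof -
  have "card ({0..<k} - {j}) = card ({0..<k} - {j'})"
    using assms(1,3) by (simp add: card_Diff_singleton_if)
  then obtain \<sigma>0 where \<sigma>0: "bij_betw \<sigma>0 ({0..<k} - {j}) ({0..<k} - {j'})"
      "\<forall>i\<in>{0..<k} - {j}. \<sigma>0 i \<in> I' \<longleftrightarrow> i \<in> I"
    using ex_bij_betw_preserving_subset assms(2,4,5) by (metis finite_Diff finite_atLeastLessThan)
  let ?\<sigma> = "\<lambda>i. if i \<in> {j} then j' else \<sigma>0 i"
  have "bij_betw ?\<sigma> ({j} \<union> ({0..<k} - {j})) ({j'} \<union> ({0..<k} - {j'}))"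
    using \<sigma>0(1) by (intro bij_betw_disjoint_Un) auto
  moreover have "{j} \<union> ({0..<k} - {j}) = {0..<k}" "{j'} \<union> ({0..<k} - {j'}) = {0..<k}"
    using assms(1,3) by auto
  moreover have "\<sigma>0 i \<noteq> j'" if "i < k" "i \<noteq> j" for i
    using \<sigma>0(1) that by (auto simp: bij_betw_def)
  ultimately show ?thesis
    using \<sigma>0(2) by (intro exI[of _ ?\<sigma>]) auto
qed

lemma star_Gamma_iso:
  assumes "j < k" "I \<subseteq> {0..<k} - {j}" "valid_centres k n cen"
    and "j' < k" "I' \<subseteq> {0..<k} - {j'}" "valid_centres k n cen'"
    and "card I = card I'"
  shows "graph_iso (verts k n)
     (Gamma k n (StarToward j) (\<lambda>i. if i = j then p else if i \<in> I then SS else C) cen)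
     (Gamma k n (StarToward j') (\<lambda>i. if i = j' then p else if i \<in> I' then SS else C) cen')"
proof -
  obtain \<sigma> where \<sigma>: "bij_betw \<sigma> {0..<k} {0..<k}" "\<sigma> j = j'"
      "\<forall>i<k. i \<noteq> j \<longrightarrow> \<sigma> i \<noteq> j' \<and> (\<sigma> i \<in> I' \<longleftrightarrow> i \<in> I)"
    using ex_permutation_mapping_point_and_subset[OF assms(1,2,4,5,7)] by blast
  show ?thesis
  proof (rule Gamma_iso[OF \<sigma>(1) _ assms(3,6)])
    fix i assume "i < k"
    with \<sigma>(2,3) show "(if \<sigma> i = j' then p else if \<sigma> i \<in> I' then SS else C) =
        (if i = j then p else if i \<in> I then SS else C)"
      by (cases "i = j") auto
  next
    from \<sigma>(2) assms(1) show "StarToward j = Complete \<and> StarToward j' = Complete \<or>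
        (\<exists>i<k. StarToward j = StarToward i \<and> StarToward j' = StarToward (\<sigma> i))"
      by blast
  qed
qed

theorem lemma8:
  fixes k n r :: nat and G G' :: "(nat \<times> nat) set set" and I I' :: "nat set"
  assumes "k \<ge> 3" and "n \<ge> 2" and "r < k"
    and "G \<in> lc_orbit (verts k n) (clique_star k n r)"
    and "G' \<in> lc_orbit (verts k n) (clique_star k n r)"
    and "(case1 k n G I \<and> case1 k n G' I') \<or>
         (case2 k n G I \<and> case2 k n G' I') \<or>
         (case3 k n G I \<and> case3 k n G' I')"
    and "card I = card I'"
  shows "graph_iso (verts k n) G G'"
  using assms(6)
proof (elim disjE conjE)
  assume "case1 k n G I" "case1 k n G' I'"
  then show ?thesis using case1_iso assms(7) by blast
next
  assume "case2 k n G I" "case2 k n G' I'"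
  then show ?thesis unfolding case2_def using star_Gamma_iso[where p = SC] assms(7) by blast
next
  assume "case3 k n G I" "case3 k n G' I'"
  then show ?thesis unfolding case3_def using star_Gamma_iso[where p = C] assms(7) by blast
qed

end
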